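(* Let $n\ge 2$ be an integer, let $Z$ be a finite set and let $T_1,T_2$ be rooted $Z$-trees with $\mathrm{Seq}(T_1)=\mathrm{Seq}(T_2)$. Let $Q_1,\dots,Q_k$ and $R_1,\dots,R_m$ be as defined in the context, and suppose $|Q_j|<|Z|/\log n$ and $|R_l|<|Z|/\log n$ for all $1\le j\le k$, $1\le l\le m$. Then there is a set $A\subseteq Z$ with $|A|\ge\log n$ such that the unrooted trees obtained from $T_1|A$ and $T_2|A$ by suppressing the root are identical, and they are caterpillars.
   Context: A rooted $Z$-tree is a binary rooted tree with a root of degree two, all other internal nodes of degree three, leaves bijectively labeled by $Z$, and each internal node having a designated left child and right child. For a node $v$, $T_v$ is the subtree rooted at $v$; $\mathrm{Le}(\cdot)$ is the leaf set; the size $|T|$ of a tree is its number of leaves. For $A\subseteq Z$, $T|A$ is the rooted tree obtained from the minimal subtree spanning $A$, rooted at the least common ancestor of $A$, by suppressing non-root degree-two nodes. $\mathrm{Seq}(T)$ is the left-to-right leaf ordering given by pre-order traversal (left child before right child). Let $P_1=(u_1,\dots,u_k)$ be the path in $T_1$ from its left-most leaf $u_1$ to its root $u_k$; $Q_1:=$ the one-leaf tree $u_1$ and for $2\le j\le k$, $Q_j:=(T_1)_c$ with $c$ the child of $u_j$ other than $u_{j-1}$. Let $P_2=(w_1,\dots,w_m)$ be the path in $T_2$ from its root $w_1$ to its right-most leaf $w_m$; $R_m:=$ the one-leaf tree $w_m$ and for $1\le l<m$, $R_l:=(T_2)_c$ with $c$ the child of $w_l$ other than $w_{l+1}$. Unrooted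 trees are identical if there is a label-preserving graph isomorphism; a tree is a caterpillar if every internal node is adjacent to at least one leaf. $\log=\log_2$. *)

theory Defs
  imports Complex_Main
begin

datatype 'a rtree = Leaf 'a | Node "'a rtree" "'a rtree"

fun Seq :: "'a rtree \<Rightarrow> 'a list" where
  "Seq (Leaf a) = [a]"
| "Seq (Node l r) = Seq l @ Seq r"

definition is_Z_tree :: "'a set \<Rightarrow> 'a rtree \<Rightarrow> bool" where
  "is_Z_tree Z T \<longleftrightarrow> distinct (Seq T) \<and> set (Seq T) = Z"

definition tsize :: "'a rtree \<Rightarrow> nat" where
  "tsize T = length (Seq T)"

text \<open>Q_1,...,Q_k: the left-most leaf, then the right subtrees hanging off the path
  from the left-most leaf up to the root (in this order).\<close>
fun Qparts :: "'a rtree \<Rightarrow> 'a rtree list" where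
  "Qparts (Leaf a) = [Leaf a]"
| "Qparts (Node l r) = Qparts l @ [r]"

text \<open>R_1,...,R_m: the left subtrees hanging off the path from the root down to the
  right-most leaf, then the right-most leaf.\<close>
fun Rparts :: "'a rtree \<Rightarrow> 'a rtree list" where
  "Rparts (Leaf a) = [Leaf a]"
| "Rparts (Node l r) = l # Rparts r"

text \<open>T|A: restriction to the leaves in A, rooted at the lca, suppressing degree-two
  nodes (None if no leaf lies in A).\<close>
fun restrict :: "'a set \<Rightarrow> 'a rtree \<Rightarrow> 'a rtree option" where
  "restrict A (Leaf a) = (if a \<in> A then Some (Leaf a) else None)"
| "restrict A (Node l r) =
     (case (restrict A l, restrict A r) of
        (None, x) \<Rightarrow> x
      | (Some l', None) \<Rightarrow> Some l'
      | (Some l', Some r') \<Rightarrow> Some (Node l' r'))"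

text \<open>Nodes of a rooted tree are addressed by positions (paths from the root,
  False = left, True = right).\<close>
fun positions :: "'a rtree \<Rightarrow> bool list set" where
  "positions (Leaf a) = {[]}"
| "positions (Node l r) =
     {[]} \<union> Cons False ` positions l \<union> Cons True ` positions r"

fun label_at :: "'a rtree \<Rightarrow> bool list \<Rightarrow> 'a option" where
  "label_at (Leaf a) [] = Some a"
| "label_at (Leaf a) (_ # _) = None"
| "label_at (Node l r) [] = None"
| "label_at (Node l r) (False # p) = label_at l p"
| "label_at (Node l r) (True # p) = label_at r p"

definition redges :: "'a rtree \<Rightarrow> bool list set set" where
  "redges t = {{p, p @ [b]} | p b. p @ [b] \<in> positions t}"

text \<open>The unrooted tree obtained by suppressing the (degree-two) root:
  vertices, edges; leaves are the labelled vertices (via label_at).\<close>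
fun uverts :: "'a rtree \<Rightarrow> bool list set" where
  "uverts (Leaf a) = {[]}"
| "uverts (Node l r) = positions (Node l r) - {[]}"

fun uedges :: "'a rtree \<Rightarrow> bool list set set" where
  "uedges (Leaf a) = {}"
| "uedges (Node l r) =
     {e \<in> redges (Node l r). [] \<notin> e} \<union> {{[False], [True]}}"

definition unrooted_identical :: "'a rtree \<Rightarrow> 'a rtree \<Rightarrow> bool" where
  "unrooted_identical t1 t2 \<longleftrightarrow>
     (\<exists>f. bij_betw f (uverts t1) (uverts t2) \<and>
          (\<forall>u\<in>uverts t1. \<forall>v\<in>uverts t1. {u, v} \<in> uedges t1 \<longleftrightarrow> {f u, f v} \<in> uedges t2) \<and>
          (\<forall>v\<in>uverts t1. label_at t2 (f v) = label_at t1 v))"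

definition caterpillar :: "'a rtree \<Rightarrow> bool" where
  "caterpillar t \<longleftrightarrow>
     (\<forall>v\<in>uverts t. label_at t v = None \<longrightarrow>
        (\<exists>u\<in>uverts t. {u, v} \<in> uedges t \<and> label_at t u \<noteq> None))"

end

theory Submission
  imports Defs "HOL-Library.Sublist"
begin

text \<open>Let \<open>s\<close> be the largest size of a part \<open>Q\<^sub>j\<close> or \<open>R\<^sub>l\<close> and let \<open>A\<close> consist of every
  \<open>s\<close>-th leaf of the common leaf sequence, so \<open>|A| \<ge> |Z|/s > log n\<close>. Each part is a block of at
  most \<open>s\<close> consecutive leaves and so meets \<open>A\<close> at most once. Hence \<open>T\<^sub>1|A\<close> is the comb
  hanging to the left and \<open>T\<^sub>2|A\<close> the comb hanging to the right over the same leaf order. Both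
  are caterpillars, and they are related by rotations at the root, which become invisible once the
  root is suppressed.\<close>

lemma Seq_not_Nil: "Seq t \<noteq> []"
  by (induction t) auto

lemma Cons_False_in_positions [simp]: "False # p \<in> positions (Node l r) \<longleftrightarrow> p \<in> positions l"
  by auto

lemma Cons_True_in_positions [simp]: "True # p \<in> positions (Node l r) \<longleftrightarrow> p \<in> positions r"
  by auto

lemma uverts_Node_iff: "v \<in> uverts (Node l r) \<longleftrightarrow> v \<in> positions (Node l r) \<and> v \<noteq> []"
  by auto

lemma doubleton_in_redges_iff:
  "{u, v} \<in> redges t \<longleftrightarrow>
     (\<exists>b. v = u @ [b] \<and> v \<in> positions t) \<or> (\<exists>b. u = v @ [b] \<and> u \<in> positions t)"
  unfolding redges_def by (auto simp: doubleton_eq_iff)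

lemma doubleton_in_uedges_Node_iff:
  "{u, v} \<in> uedges (Node l r) \<longleftrightarrow>
     ({u, v} \<in> redges (Node l r) \<and> u \<noteq> [] \<and> v \<noteq> []) \<or> {u, v} = {[False], [True]}"
  by auto

lemma unrooted_identical_refl: "unrooted_identical t t"
  unfolding unrooted_identical_def by (rule exI[of _ id]) auto

lemma unrooted_identical_trans [trans]:
  assumes "unrooted_identical t1 t2" "unrooted_identical t2 t3"
  shows "unrooted_identical t1 t3"
proof -
  obtain f where f: "bij_betw f (uverts t1) (uverts t2)"
    "\<forall>u\<in>uverts t1. \<forall>v\<in>uverts t1. {u, v} \<in> uedges t1 \<longleftrightarrow> {f u, f v} \<in> uedges t2"
    "\<forall>v\<in>uverts t1. label_at t2 (f v) = label_at t1 v"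
    using assms(1) unfolding unrooted_identical_def by blast
  obtain g where g: "bij_betw g (uverts t2) (uverts t3)"
    "\<forall>u\<in>uverts t2. \<forall>v\<in>uverts t2. {u, v} \<in> uedges t2 \<longleftrightarrow> {g u, g v} \<in> uedges t3"
    "\<forall>v\<in>uverts t2. label_at t3 (g v) = label_at t2 v"
    using assms(2) unfolding unrooted_identical_def by blast
  have "\<And>v. v \<in> uverts t1 \<Longrightarrow> f v \<in> uverts t2"
    using f(1) bij_betwE by blast
  then show ?thesis
    unfolding unrooted_identical_def
    using bij_betw_trans[OF f(1) g(1)] f(2,3) g(2,3) by (intro exI[of _ "g \<circ> f"]) auto
qed

text \<open>Suppressing the root forgets the rotation
  \<open>Node (Node a b) c \<mapsto> Node a (Node b c)\<close>; on positions it is the bijection below.\<close>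

fun rotate_right_pos :: "bool list \<Rightarrow> bool list" where
  "rotate_right_pos (False # False # q) = False # q"
| "rotate_right_pos (False # True # q) = True # False # q"
| "rotate_right_pos [False] = [True]"
| "rotate_right_pos (True # q) = True # True # q"
| "rotate_right_pos [] = []"

fun rotate_left_pos :: "bool list \<Rightarrow> bool list" where
  "rotate_left_pos (False # q) = False # False # q"
| "rotate_left_pos (True # False # q) = False # True # q"
| "rotate_left_pos [True] = [False]"
| "rotate_left_pos (True # True # q) = True # q"
| "rotate_left_pos [] = []"

lemma rotate_left_right_pos [simp]: "rotate_left_pos (rotate_right_pos p) = p"
  by (induction p rule: rotate_right_pos.induct) auto

lemma rotate_right_left_pos [simp]: "rotate_right_pos (rotate_left_pos p) = p"
  by (induction p rule: rotate_left_pos.induct) auto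

lemma label_at_rotate_right_pos:
  "label_at (Node a (Node b c)) (rotate_right_pos v) = label_at (Node (Node a b) c) v"
  by (induction v rule: rotate_right_pos.induct) auto

lemma rotate_right_pos_in_uverts_iff:
  "rotate_right_pos v \<in> uverts (Node a (Node b c)) \<longleftrightarrow> v \<in> uverts (Node (Node a b) c)"
  by (induction v rule: rotate_right_pos.induct) auto

lemma rotate_right_pos_uedges_iff:
  assumes "u \<in> uverts (Node (Node a b) c)" "v \<in> uverts (Node (Node a b) c)"
  shows "{u, v} \<in> uedges (Node (Node a b) c) \<longleftrightarrow>
         {rotate_right_pos u, rotate_right_pos v} \<in> uedges (Node a (Node b c))"
  using assms unfolding doubleton_in_uedges_Node_iff doubleton_in_redges_iff uverts_Node_iff
  by (induction u rule: rotate_right_pos.induct; induction v rule: rotate_right_pos.induct)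
     (auto simp: doubleton_eq_iff)

lemma unrooted_identical_rotate:
  "unrooted_identical (Node (Node a b) c) (Node a (Node b c))"
  unfolding unrooted_identical_def
proof (intro exI conjI ballI)
  show "bij_betw rotate_right_pos (uverts (Node (Node a b) c)) (uverts (Node a (Node b c)))"
    by (rule bij_betw_byWitness[where f' = rotate_left_pos])
       (auto simp flip: rotate_right_pos_in_uverts_iff)
qed (simp_all only: label_at_rotate_right_pos rotate_right_pos_uedges_iff)

definition left_comb :: "'a list \<Rightarrow> 'a rtree" where
  "left_comb xs = foldl (\<lambda>t y. Node t (Leaf y)) (Leaf (hd xs)) (tl xs)"

fun right_comb :: "'a list \<Rightarrow> 'a rtree" where
  "right_comb [a] = Leaf a"
| "right_comb (a # b # xs) = Node (Leaf a) (right_comb (b # xs))"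

lemma left_comb_singleton [simp]: "left_comb [a] = Leaf a"
  by (simp add: left_comb_def)

lemma left_comb_snoc: "ys \<noteq> [] \<Longrightarrow> left_comb (ys @ [y]) = Node (left_comb ys) (Leaf y)"
  by (cases ys) (simp_all add: left_comb_def)

lemma right_comb_Cons: "zs \<noteq> [] \<Longrightarrow> right_comb (z # zs) = Node (Leaf z) (right_comb zs)"
  by (cases zs) auto

lemma unrooted_identical_left_comb_right_comb_append:
  "ys \<noteq> [] \<Longrightarrow> zs \<noteq> [] \<Longrightarrow>
   unrooted_identical (Node (left_comb ys) (right_comb zs)) (right_comb (ys @ zs))"
proof (induction ys arbitrary: zs rule: rev_induct)
  case (snoc y ys)
  show ?case
  proof (cases "ys = []")
    case True
    then show ?thesis using snoc.prems by (simp add: right_comb_Cons unrooted_identical_refl)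
  next
    case False
    have "unrooted_identical (Node (left_comb (ys @ [y])) (right_comb zs))
                             (Node (left_comb ys) (right_comb (y # zs)))"
      using False snoc.prems by (simp add: left_comb_snoc right_comb_Cons unrooted_identical_rotate)
    also have "unrooted_identical \<dots> (right_comb (ys @ y # zs))"
      using snoc.IH[OF False] by simp
    finally show ?thesis
      by simp
  qed
qed simp

lemma unrooted_identical_left_comb_right_comb:
  assumes "xs \<noteq> []"
  shows "unrooted_identical (left_comb xs) (right_comb xs)"
proof (cases xs rule: rev_cases)
  case (snoc ys y)
  show ?thesis
  proof (cases "ys = []")
    case False
    then show ?thesis
      using snoc unrooted_identical_left_comb_right_comb_append[OF False, of "[y]"]
      by (simp add: left_comb_snoc)
  qed (simp add: snoc unrooted_identical_refl)
qed (use assms in simp)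

fun is_leaf :: "'a rtree \<Rightarrow> bool" where
  "is_leaf (Leaf a) = True"
| "is_leaf (Node l r) = False"

fun rooted_caterpillar :: "'a rtree \<Rightarrow> bool" where
  "rooted_caterpillar (Leaf a) = True"
| "rooted_caterpillar (Node l r) =
     ((is_leaf l \<or> is_leaf r) \<and> rooted_caterpillar l \<and> rooted_caterpillar r)"

lemma rooted_caterpillar_leaf_child:
  assumes "rooted_caterpillar t" "p \<in> positions t" "label_at t p = None"
  shows "\<exists>b. p @ [b] \<in> positions t \<and> label_at t (p @ [b]) \<noteq> None"
  using assms
proof (induction t arbitrary: p)
  case (Node l r)
  show ?case
  proof (cases p)
    case Nil
    then show ?thesis
      using Node.prems(1) by (cases l; cases r) (auto intro: exI[of _ False] exI[of _ True])
  next
    case (Cons b q)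
    then show ?thesis
      using Node by (cases b) (auto simp del: positions.simps)
  qed
qed simp

lemma rooted_caterpillar_imp_caterpillar:
  assumes "rooted_caterpillar t"
  shows "caterpillar t"
proof (cases t)
  case (Node l r)
  show ?thesis
    unfolding caterpillar_def
  proof (intro ballI impI)
    fix v
    assume v: "v \<in> uverts t" "label_at t v = None"
    then have "v \<in> positions t" "v \<noteq> []"
      using Node by auto
    with assms v(2) obtain b where b: "v @ [b] \<in> positions t" "label_at t (v @ [b]) \<noteq> None"
      using rooted_caterpillar_leaf_child by blast
    have "{v @ [b], v} \<in> uedges t" "v @ [b] \<in> uverts t"
      using Node b \<open>v \<noteq> []\<close> by (auto simp: doubleton_in_redges_iff)
    with b(2) show "\<exists>u\<in>uverts t. {u, v} \<in> uedges t \<and> label_at t u \<noteq> None"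
      by blast
  qed
qed (simp add: caterpillar_def)

lemma rooted_caterpillar_right_comb: "xs \<noteq> [] \<Longrightarrow> rooted_caterpillar (right_comb xs)"
  by (induction xs rule: right_comb.induct) auto

lemma rooted_caterpillar_left_comb: "xs \<noteq> [] \<Longrightarrow> rooted_caterpillar (left_comb xs)"
proof (induction xs rule: rev_induct)
  case (snoc y ys)
  then show ?case
    by (cases "ys = []") (simp_all add: left_comb_snoc)
qed simp

lemma restrict_eq_None_iff: "restrict A t = None \<longleftrightarrow> filter (\<lambda>x. x \<in> A) (Seq t) = []"
  by (induction t) (auto split: option.splits)

lemma restrict_eq_Leaf:
  "filter (\<lambda>x. x \<in> A) (Seq t) = [a] \<Longrightarrow> restrict A t = Some (Leaf a)"
proof (induction t)
  case (Node l r)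
  then have "filter (\<lambda>x. x \<in> A) (Seq l) = [] \<and> filter (\<lambda>x. x \<in> A) (Seq r) = [a] \<or>
             filter (\<lambda>x. x \<in> A) (Seq l) = [a] \<and> filter (\<lambda>x. x \<in> A) (Seq r) = []"
    by (auto simp: append_eq_Cons_conv)
  then show ?case
    using Node.IH by (auto simp flip: restrict_eq_None_iff)
qed (auto split: if_splits)

lemma restrict_eq_left_comb:
  assumes "\<forall>Q \<in> set (Qparts t). length (filter (\<lambda>x. x \<in> A) (Seq Q)) \<le> 1"
    and "filter (\<lambda>x. x \<in> A) (Seq t) \<noteq> []"
  shows "restrict A t = Some (left_comb (filter (\<lambda>x. x \<in> A) (Seq t)))"
  using assms
proof (induction t)
  case (Node l r)
  let ?fl = "filter (\<lambda>x. x \<in> A) (Seq l)" and ?fr = "filter (\<lambda>x. x \<in> A) (Seq r)"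
  from Node.prems(1) consider "?fr = []" | a where "?fr = [a]"
    by (cases ?fr) auto
  then show ?case
  proof cases
    case 1
    with Node show ?thesis
      by (simp add: restrict_eq_None_iff[THEN iffD2])
  next
    case (2 a)
    with Node show ?thesis
      by (cases "?fl = []")
         (simp_all add: restrict_eq_Leaf left_comb_snoc restrict_eq_None_iff[THEN iffD2])
  qed
qed (auto split: if_splits)

lemma restrict_eq_right_comb:
  assumes "\<forall>R \<in> set (Rparts t). length (filter (\<lambda>x. x \<in> A) (Seq R)) \<le> 1"
    and "filter (\<lambda>x. x \<in> A) (Seq t) \<noteq> []"
  shows "restrict A t = Some (right_comb (filter (\<lambda>x. x \<in> A) (Seq t)))"
  using assms
proof (induction t)
  case (Node l r)
  let ?fl = "filter (\<lambda>x. x \<in> A) (Seq l)" and ?fr = "filter (\<lambda>x. x \<in> A) (Seq r)"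
  from Node.prems(1) consider "?fl = []" | a where "?fl = [a]"
    by (cases ?fl) auto
  then show ?case
  proof cases
    case 1
    with Node show ?thesis
      by (simp add: restrict_eq_None_iff[THEN iffD2])
  next
    case (2 a)
    with Node show ?thesis
      by (cases "?fr = []")
         (simp_all add: restrict_eq_Leaf right_comb_Cons restrict_eq_None_iff[THEN iffD2])
  qed
qed (auto split: if_splits)

lemma restrict_unrooted_identical_caterpillars:
  assumes "Seq T1 = Seq T2"
    and "\<forall>Q \<in> set (Qparts T1). length (filter (\<lambda>x. x \<in> A) (Seq Q)) \<le> 1"
    and "\<forall>R \<in> set (Rparts T2). length (filter (\<lambda>x. x \<in> A) (Seq R)) \<le> 1"
    and "filter (\<lambda>x. x \<in> A) (Seq T1) \<noteq> []"
  shows "\<exists>t1 t2. restrict A T1 = Some t1 \<and> restrict A T2 = Some t2 \<and>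
           unrooted_identical t1 t2 \<and> caterpillar t1 \<and> caterpillar t2"
proof -
  let ?xs = "filter (\<lambda>x. x \<in> A) (Seq T1)"
  have "restrict A T1 = Some (left_comb ?xs)" "restrict A T2 = Some (right_comb ?xs)"
    using assms by (simp_all add: restrict_eq_left_comb restrict_eq_right_comb)
  with assms(4) show ?thesis
    by (auto intro!: unrooted_identical_left_comb_right_comb rooted_caterpillar_imp_caterpillar
        rooted_caterpillar_left_comb rooted_caterpillar_right_comb)
qed

lemma sublist_Seq_Qparts: "Q \<in> set (Qparts t) \<Longrightarrow> sublist (Seq Q) (Seq t)"
  by (induction t) (auto intro: sublist_order.order.trans[OF _ sublist_append_rightI])

lemma sublist_Seq_Rparts: "R \<in> set (Rparts t) \<Longrightarrow> sublist (Seq R) (Seq t)"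
  by (induction t) (auto intro: sublist_order.order.trans[OF _ sublist_append_leftI])

definition stride_sample :: "'a list \<Rightarrow> nat \<Rightarrow> 'a set" where
  "stride_sample S s = (\<lambda>j. S ! (j * s)) ` {j. j * s < length S}"

lemma stride_sample_subset: "stride_sample S s \<subseteq> set S"
  by (auto simp: stride_sample_def)

lemma hd_in_stride_sample: "S \<noteq> [] \<Longrightarrow> hd S \<in> stride_sample S s"
  unfolding stride_sample_def by (rule image_eqI[of _ _ 0]) (auto simp: hd_conv_nth)

lemma card_stride_sample:
  assumes "distinct S" "0 < s"
  shows "real (length S) / real s \<le> real (card (stride_sample S s))"
proof -
  let ?c = "nat \<lceil>real (length S) / real s\<rceil>"
  have "j * s < length S \<longleftrightarrow> j < ?c" for j
  proof -
    have "j * s < length S \<longleftrightarrow> real j < real (length S) / real s"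
      using assms(2) by (simp add: less_divide_eq flip: of_nat_mult)
    also have "\<dots> \<longleftrightarrow> j < ?c"
      by (simp add: less_ceiling_iff zless_nat_eq_int_zless)
    finally show ?thesis .
  qed
  then have "{j. j * s < length S} = {..<?c}"
    by auto
  moreover have "inj_on (\<lambda>j. S ! (j * s)) {j. j * s < length S}"
    using assms by (auto intro!: inj_onI simp: nth_eq_iff_index_eq)
  ultimately have "card (stride_sample S s) = ?c"
    by (simp add: stride_sample_def card_image)
  then show ?thesis
    by (simp add: of_nat_ceiling)
qed

lemma nth_in_middle_segment:
  assumes "distinct (p @ m @ q)" "i < length (p @ m @ q)" "(p @ m @ q) ! i \<in> set m"
  shows "length p \<le> i \<and> i < length p + length m"
  using assms by (auto simp: nth_append dest!: nth_mem split: if_splits)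

text \<open>A block of at most \<open>s\<close> consecutive positions contains at most one multiple of \<open>s\<close>.\<close>

lemma sublist_meets_stride_sample_at_most_once:
  assumes "distinct S" "sublist m S" "length m \<le> s"
  shows "length (filter (\<lambda>x. x \<in> stride_sample S s) m) \<le> 1"
proof -
  obtain p q where S: "S = p @ m @ q"
    using assms(2) by (auto simp: sublist_def)
  have bounds: "length p \<le> j * s \<and> j * s < length p + length m"
    if "j * s < length S" "S ! (j * s) \<in> set m" for j
    using nth_in_middle_segment[of p m q] assms(1) that S by simp
  have "x = y" if xy: "x \<in> set m \<inter> stride_sample S s" "y \<in> set m \<inter> stride_sample S s" for x y
  proof -
    obtain i j where ij: "i * s < length S" "j * s < length S" "x = S ! (i * s)" "y = S ! (j * s)"
      using xy by (auto simp: stride_sample_def)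
    have "i * s < (j + 1) * s" "j * s < (i + 1) * s"
      using bounds[of i] bounds[of j] ij xy assms(3) by auto
    then have "i = j"
      by (simp only: mult_less_cancel2) linarith
    then show "x = y"
      using ij by simp
  qed
  then have "card (set m \<inter> stride_sample S s) \<le> 1"
    by (auto simp: card_le_Suc0_iff_eq)
  moreover have "distinct m"
    using assms(1) S by simp
  ultimately show ?thesis
    by (simp add: distinct_card[symmetric] Int_def set_filter conj_commute)
qed

lemma caterpillar_restriction_of_small_parts:
  assumes "Seq T1 = Seq T2" "distinct (Seq T1)" "0 < s"
    and "\<forall>P \<in> set (Qparts T1) \<union> set (Rparts T2). tsize P \<le> s"
  shows "\<exists>A \<subseteq> set (Seq T1). real (length (Seq T1)) / real s \<le> real (card A) \<and>
           (\<exists>t1 t2. restrict A T1 = Some t1 \<and> restrict A T2 = Some t2 \<and>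
                    unrooted_identical t1 t2 \<and> caterpillar t1 \<and> caterpillar t2)"
proof -
  define A where "A = stride_sample (Seq T1) s"
  have "length (filter (\<lambda>x. x \<in> A) (Seq P)) \<le> 1"
    if "P \<in> set (Qparts T1) \<union> set (Rparts T2)" for P
    using that assms sublist_Seq_Qparts[of P T1] sublist_Seq_Rparts[of P T2]
      sublist_meets_stride_sample_at_most_once[OF assms(2)]
    by (auto simp: A_def tsize_def)
  moreover have "filter (\<lambda>x. x \<in> A) (Seq T1) \<noteq> []"
    using hd_in_stride_sample[of "Seq T1" s] Seq_not_Nil[of T1]
    by (auto simp: A_def filter_empty_conv)
  ultimately show ?thesis
    using restrict_unrooted_identical_caterpillars[of T1 T2 A] assms(1)
      card_stride_sample[OF assms(2,3)] stride_sample_subset[of "Seq T1" s]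
    by (auto simp: A_def)
qed

theorem lemma2:
  fixes n :: nat and Z :: "'a set" and T1 T2 :: "'a rtree"
  assumes "n \<ge> 2"
    and "finite Z"
    and "is_Z_tree Z T1" and "is_Z_tree Z T2"
    and "Seq T1 = Seq T2"
    and "\<forall>Q \<in> set (Qparts T1). real (tsize Q) < real (card Z) / log 2 (real n)"
    and "\<forall>R \<in> set (Rparts T2). real (tsize R) < real (card Z) / log 2 (real n)"
  shows "\<exists>A \<subseteq> Z. real (card A) \<ge> log 2 (real n) \<and>
           (\<exists>t1 t2. restrict A T1 = Some t1 \<and> restrict A T2 = Some t2 \<and>
                    unrooted_identical t1 t2 \<and> caterpillar t1 \<and> caterpillar t2)"
proof -
  define parts where "parts = set (Qparts T1) \<union> set (Rparts T2)"
  define s where "s = Max (tsize ` parts)"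
  have Z: "distinct (Seq T1)" "set (Seq T1) = Z" "card Z = length (Seq T1)"
    using assms(3) by (auto simp: is_Z_tree_def distinct_card)
  have "finite parts" "parts \<noteq> {}"
    unfolding parts_def by (cases T1; simp)+
  then have "s \<in> tsize ` parts"
    unfolding s_def by (intro Max_in) auto
  with assms(6,7) Z(3) have "0 < s" "real s < real (card Z) / log 2 (real n)"
    by (auto simp: parts_def tsize_def Seq_not_Nil)
  moreover have "1 \<le> log 2 (real n)"
    using assms(1) by (simp add: le_log_iff)
  ultimately have log_n: "log 2 (real n) < real (length (Seq T1)) / real s"
    by (simp add: Z(3) field_simps)
  have "\<forall>P \<in> parts. tsize P \<le> s"
    using \<open>finite parts\<close> by (simp add: s_def)
  then obtain A where "A \<subseteq> Z" "real (length (Seq T1)) / real s \<le> real (card A)"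
    "\<exists>t1 t2. restrict A T1 = Some t1 \<and> restrict A T2 = Some t2 \<and>
       unrooted_identical t1 t2 \<and> caterpillar t1 \<and> caterpillar t2"
    using caterpillar_restriction_of_small_parts[OF assms(5) Z(1) \<open>0 < s\<close>] Z(2)
    unfolding parts_def by blast
  moreover from log_n this(2) have "log 2 (real n) \<le> real (card A)"
    by linarith
  ultimately show ?thesis
    by blast
qed

end
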